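(* Let $p,q$ be distinct positive integers and $n\ge 1$. For every state $x=(x_1,\dots,x_n)\in\{p,q\}^n$, every sequence $s=(s_1,\dots,s_m)$ of elements of $\{p,q\}$ with $m\ge 1$, and every $k\in\{1,\dots,m\}$, $$RLD^{p,q}_n(x, s_{1:m}) = RLD^{p,q}_n(x, s_{1:k}) \circ RLD^{p,q}_n\big(A^{p,q}_n(x, s_{1:k}), s_{k+1:m}\big),$$ where $\circ$ denotes concatenation of finite sequences, $s_{i:j}=(s_i,\dots,s_j)$, and $s_{k+1:m}$ is the empty sequence when $k=m$.
   Context: Let $p,q$ be distinct positive integers. Define $\mathrm{Opp}(p)=q$, $\mathrm{Opp}(q)=p$. For $x\in\{p,q\}$ and a finite sequence $s=(s_1,\dots,s_m)$ of positive integers, the run-length decoding $RLD^{p,q}(x,s)$ is the sequence over $\{p,q\}$ consisting of $s_1$ copies of $x$, followed by $s_2$ copies of $\mathrm{Opp}(x)$, followed by $s_3$ copies of $x$, and so on alternately (so it begins with $x$ and has run lengths $s_1,\dots,s_m$); the decoding of the empty sequence is empty. For $n\ge1$ and $x=(x_1,\dots,x_n)\in\{p,q\}^n$, the $n$-iterated decoding is defined by $RLD^{p,q}_1(x_1,s)=RLD^{p,q}(x_1,s)$ and $RLD^{p,q}_n(x_{1:n},s)=RLD^{p,q}(x_n, RLD^{p,q}_{n-1}(x_{1:n-1},s))$. For a nonempty sequence $t$ over $\{p,q\}$, $\mathrm{OppEnd}(t)=\mathrm{Opp}(\text{last entry of } t)$. The automaton $A^{p,q}_n$ has state set $\{p,q\}^n$;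 for a state $x$ and a nonempty finite sequence $s$ over $\{p,q\}$, $A^{p,q}_n(x,s)\in\{p,q\}^n$ is the state whose $i$-th coordinate is $\mathrm{OppEnd}(RLD^{p,q}_i(x_{1:i},s))$ for $i=1,\dots,n$. *)

theory Defs
  imports Main
begin

definition Opp :: "nat \<Rightarrow> nat \<Rightarrow> nat \<Rightarrow> nat" where
  "Opp p q x = (if x = p then q else p)"

fun RLD :: "nat \<Rightarrow> nat \<Rightarrow> nat \<Rightarrow> nat list \<Rightarrow> nat list" where
  "RLD p q x [] = []"
| "RLD p q x (a # s) = replicate a x @ RLD p q (Opp p q x) s"

text \<open>n-iterated decoding: RLD_n(x_1..x_n, s) = RLD(x_n, RLD_(n-1)(x_1..x_(n-1), s)),
  RLD_1(x_1,s) = RLD(x_1,s). The state is a list [x_1,...,x_n].\<close>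
definition RLD_iter :: "nat \<Rightarrow> nat \<Rightarrow> nat list \<Rightarrow> nat list \<Rightarrow> nat list" where
  "RLD_iter p q xs s = foldl (\<lambda>t x. RLD p q x t) s xs"

definition OppEnd :: "nat \<Rightarrow> nat \<Rightarrow> nat list \<Rightarrow> nat" where
  "OppEnd p q t = Opp p q (last t)"

definition Aut :: "nat \<Rightarrow> nat \<Rightarrow> nat list \<Rightarrow> nat list \<Rightarrow> nat list" where
  "Aut p q xs s = map (\<lambda>i. OppEnd p q (RLD_iter p q (take (Suc i) xs) s)) [0..<length xs]"

end

theory Submission
  imports Defs
begin

text \<open>Decoding is compatible with concatenation up to the starting symbol: decoding \<open>a @ b\<close>
  from \<open>y\<close> gives the decoding of \<open>a\<close> followed by the decoding of \<open>b\<close> from \<open>y\<close> flipped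
  \<open>length a\<close> times. When all run lengths are positive, that symbol is the opposite of the last
  symbol produced, which is exactly what the automaton records at each level; an induction on
  the number of levels then gives the theorem.\<close>

lemma RLD_append:
  "RLD p q y (a @ b) = RLD p q y a @ RLD p q ((Opp p q ^^ length a) y) b"
  by (induction a arbitrary: y) (simp_all add: funpow_swap1)

lemma RLD_eq_Nil_iff: "0 \<notin> set a \<Longrightarrow> RLD p q y a = [] \<longleftrightarrow> a = []"
  by (cases a) auto

lemma zero_not_in_RLD:
  assumes "0 < p" "0 < q" "0 < y"
  shows "0 \<notin> set (RLD p q y a)"
  using assms(3)
proof (induction a arbitrary: y)
  case (Cons c a)
  have "0 < Opp p q y" using assms(1,2) by (simp add: Opp_def)
  with Cons show ?case by auto
qed simp

lemma OppEnd_RLD: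
  "a \<noteq> [] \<Longrightarrow> 0 \<notin> set a \<Longrightarrow> OppEnd p q (RLD p q y a) = (Opp p q ^^ length a) y"
proof (induction a arbitrary: y)
  case (Cons c a)
  show ?case
  proof (cases "a = []")
    case True
    with Cons.prems show ?thesis by (simp add: OppEnd_def)
  next
    case False
    with Cons.prems have "RLD p q (Opp p q y) a \<noteq> []" by (simp add: RLD_eq_Nil_iff)
    with Cons False show ?thesis by (simp add: OppEnd_def funpow_swap1)
  qed
qed simp

lemma RLD_iter_Nil [simp]: "RLD_iter p q [] s = s"
  by (simp add: RLD_iter_def)

lemma RLD_iter_snoc [simp]: "RLD_iter p q (xs @ [y]) s = RLD p q y (RLD_iter p q xs s)"
  by (simp add: RLD_iter_def)

lemma Aut_Nil [simp]: "Aut p q [] s = []"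
  by (simp add: Aut_def)

lemma Aut_snoc [simp]:
  "Aut p q (xs @ [y]) s = Aut p q xs s @ [OppEnd p q (RLD_iter p q (xs @ [y]) s)]"
  by (simp add: Aut_def)

lemma RLD_iter_nonempty_positive:
  assumes "0 < p" "0 < q" "0 \<notin> set xs" "s \<noteq> []" "0 \<notin> set s"
  shows "RLD_iter p q xs s \<noteq> [] \<and> 0 \<notin> set (RLD_iter p q xs s)"
  using assms(3)
proof (induction xs rule: rev_induct)
  case (snoc y xs)
  then show ?case
    using zero_not_in_RLD[OF assms(1,2)] by (auto simp: RLD_eq_Nil_iff)
qed (use assms in simp)

lemma RLD_iter_append:
  assumes "0 < p" "0 < q" "0 \<notin> set xs" "t \<noteq> []" "0 \<notin> set t"
  shows "RLD_iter p q xs (t @ u) = RLD_iter p q xs t @ RLD_iter p q (Aut p q xs t) u"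
  using assms(3)
proof (induction xs rule: rev_induct)
  case (snoc y xs)
  define T where "T = RLD_iter p q xs t"
  have T: "T \<noteq> []" "0 \<notin> set T"
    using RLD_iter_nonempty_positive[OF assms(1,2) _ assms(4,5)] snoc.prems
    unfolding T_def by auto
  have "RLD_iter p q (xs @ [y]) (t @ u) = RLD p q y (T @ RLD_iter p q (Aut p q xs t) u)"
    using snoc by (simp add: T_def)
  also have "\<dots> = RLD p q y T @ RLD p q ((Opp p q ^^ length T) y) (RLD_iter p q (Aut p q xs t) u)"
    by (rule RLD_append)
  also have "(Opp p q ^^ length T) y = OppEnd p q (RLD p q y T)"
    using OppEnd_RLD[OF T] by simp
  finally show ?case by (simp add: T_def)
qed simp

theorem proposition1:
  fixes p q n :: nat and x s :: "nat list" and k :: nat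
  assumes "0 < p" and "0 < q" and "p \<noteq> q"
    and "1 \<le> n"
    and "length x = n" and "set x \<subseteq> {p, q}"
    and "s \<noteq> []" and "set s \<subseteq> {p, q}"
    and "1 \<le> k" and "k \<le> length s"
  shows "RLD_iter p q x s =
           RLD_iter p q x (take k s) @ RLD_iter p q (Aut p q x (take k s)) (drop k s)"
proof -
  have "0 \<notin> set x" using assms(1,2,6) by auto
  moreover have "take k s \<noteq> []" using assms(7,9) by simp
  moreover have "0 \<notin> set (take k s)"
    using assms(1,2,8) set_take_subset[of k s] by auto
  ultimately show ?thesis
    using RLD_iter_append[OF assms(1,2), of x "take k s" "drop k s"] by simp
qed

end
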